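(* Let $\mathcal{S}$ be a discrete state space, $\mathcal{A}$ a finite action space, $\mathcal{R}=[-1,1]^{\mathcal{S}\times\mathcal{A}}$, $\Pi$ the set of functions $\mathcal{S}\to\mathcal{A}$, $\mathcal{P}$ the set of planners $p:\mathcal{R}\to\Pi$, and let $\dot\pi\in\Pi$. Let $L$ be a computer language (universal Turing machine) with Kolmogorov complexity $K_L$, let $c\ge 0$, and suppose $L$ is $c$-reasonable for $F$, i.e. $$\max_{(p,R)\in\mathcal{P}\times\mathcal{R},\ F_i\in F}\big(K_L(F_i(p,R))-K_L(p,R)\big)\le c.$$ Then each of the pairs $(p_{\dot\pi},0)$, $(p_g,R_{\dot\pi})$ and $(-p_g,-R_{\dot\pi})$ is compatible with $\dot\pi$ and is amongst the pairs of lowest complexity among the pairs compatible with $\dot\pi$, in the sense that for each such pair $(p',R')$, $$\Big|K_L(p',R')-\min_{(p,R)\in\mathcal{P}\times\mathcal{R}:\ p(R)=\dot\pi}K_L(p,R)\Big|\le c.$$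
   Context: A planner-reward pair $(p,R)$ is compatible with $\dot\pi$ if $p(R)=\dot\pi$. $K_L(x)$ denotes the length of the shortest program in $L$ that generates (a description of) the object $x$. Notation: $0$ is the zero reward; $p_\pi$ is the planner with $p_\pi(R)=\pi$ for all $R$; $R_\pi(s,a)=1$ if $\pi(s)=a$ and $0$ otherwise; $p_g(R)(s)=\arg\max_a R(s,a)$; for a planner $p$, $-p$ is the planner $(-p)(R)=p(-R)$; $-R$ is the pointwise negative of $R$. Basic operations: $f_1(p)=(p,0)$; $f_2(R)=(p_g,R)$; $f_3(p,R)=p(R)$; $f_4(p,R)=(-p,-R)$; $f_5(\pi)=p_\pi$; $f_6(\pi)=R_\pi$. The set $F=\{F_1,F_2,F_3,F_4\}$ consists of $F_1=f_1\circ f_5\circ f_3$, $F_2=f_2\circ f_6\circ f_3$, $F_3=f_4\circ f_2\circ f_6\circ f_3$, $F_4=f_4$, each mapping planner-reward pairs to planner-reward pairs. *)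

theory Defs
  imports Complex_Main
begin

type_synonym ('s,'a) reward = "'s \<Rightarrow> 'a \<Rightarrow> real"
type_synonym ('s,'a) policy = "'s \<Rightarrow> 'a"
type_synonym ('s,'a) planner = "('s,'a) reward \<Rightarrow> ('s,'a) policy"

definition rewards :: "('s,'a) reward set" where
  "rewards = {R. \<forall>s a. -1 \<le> R s a \<and> R s a \<le> 1}"

text \<open>Planners are functions from the reward space to policies; outside the reward
  space they are fixed to undefined, so that they are exactly functions on the reward space.\<close>
definition planners :: "('s,'a) planner set" where
  "planners = {p. \<forall>R. R \<notin> rewards \<longrightarrow> p R = undefined}"

definition zero_reward :: "('s,'a) reward" where
  "zero_reward = (\<lambda>s a. 0)"

definition p_pol :: "('s,'a) policy \<Rightarrow> ('s,'a) planner" where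
  "p_pol \<pi> = (\<lambda>R. if R \<in> rewards then \<pi> else undefined)"

definition R_pol :: "('s,'a) policy \<Rightarrow> ('s,'a) reward" where
  "R_pol \<pi> = (\<lambda>s a. if \<pi> s = a then 1 else 0)"

definition p_greedy :: "('s,'a) planner" where
  "p_greedy = (\<lambda>R. if R \<in> rewards then (\<lambda>s. arg_max (\<lambda>a. R s a) (\<lambda>_. True)) else undefined)"

definition neg_planner :: "('s,'a) planner \<Rightarrow> ('s,'a) planner" where
  "neg_planner p = (\<lambda>R. p (\<lambda>s a. - R s a))"

definition neg_reward :: "('s,'a) reward \<Rightarrow> ('s,'a) reward" where
  "neg_reward R = (\<lambda>s a. - R s a)"

definition f1 :: "('s,'a) planner \<Rightarrow> ('s,'a) planner \<times> ('s,'a) reward" where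
  "f1 p = (p, zero_reward)"
definition f2 :: "('s,'a) reward \<Rightarrow> ('s,'a) planner \<times> ('s,'a) reward" where
  "f2 R = (p_greedy, R)"
definition f3 :: "('s,'a) planner \<times> ('s,'a) reward \<Rightarrow> ('s,'a) policy" where
  "f3 pr = (fst pr) (snd pr)"
definition f4 :: "('s,'a) planner \<times> ('s,'a) reward \<Rightarrow> ('s,'a) planner \<times> ('s,'a) reward" where
  "f4 pr = (neg_planner (fst pr), neg_reward (snd pr))"
definition f5 :: "('s,'a) policy \<Rightarrow> ('s,'a) planner" where
  "f5 = p_pol"
definition f6 :: "('s,'a) policy \<Rightarrow> ('s,'a) reward" where
  "f6 = R_pol"

definition F1 where "F1 = f1 \<circ> f5 \<circ> f3"
definition F2 where "F2 = f2 \<circ> f6 \<circ> f3"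
definition F3 where "F3 = f4 \<circ> f2 \<circ> f6 \<circ> f3"
definition F4 where "F4 = f4"

definition Fset :: "(('s,'a) planner \<times> ('s,'a) reward \<Rightarrow> ('s,'a) planner \<times> ('s,'a) reward) set" where
  "Fset = {F1, F2, F3, F4}"

text \<open>Kolmogorov complexity K_L is modelled as an arbitrary function K from
  planner-reward pairs to nat. c-reasonableness: the max over (p,R) and F_i of
  K(F_i(p,R)) - K(p,R) is at most c, i.e. every such difference is at most c.\<close>
definition c_reasonable ::
  "(('s,'a) planner \<times> ('s,'a) reward \<Rightarrow> nat) \<Rightarrow> real \<Rightarrow> bool" where
  "c_reasonable K c \<longleftrightarrow>
     (\<forall>p\<in>planners. \<forall>R\<in>rewards. \<forall>F\<in>Fset. real (K (F (p, R))) - real (K (p, R)) \<le> c)"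

definition compatible :: "('s,'a) policy \<Rightarrow> ('s,'a) planner \<times> ('s,'a) reward \<Rightarrow> bool" where
  "compatible \<pi> pr \<longleftrightarrow> (fst pr) (snd pr) = \<pi>"

definition min_compatible_K ::
  "(('s,'a) planner \<times> ('s,'a) reward \<Rightarrow> nat) \<Rightarrow> ('s,'a) policy \<Rightarrow> nat" where
  "min_compatible_K K \<pi> = Inf (K ` {(p, R). p \<in> planners \<and> R \<in> rewards \<and> compatible \<pi> (p, R)})"

end

theory Submission
  imports Defs
begin

text \<open>Each of the three pairs is the image of every pair compatible with the policy under one
  of the maps F1, F2, F3, since these maps only look at the policy the pair produces. Applying
  that map to a compatible pair of minimal complexity raises the complexity by at most c, and
  the image is itself compatible, so its complexity lies within c of the minimum.\<close>

definition compatible_pairs :: "('s,'a) policy \<Rightarrow> (('s,'a) planner \<times> ('s,'a) reward) set" where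
  "compatible_pairs \<pi> = {(p, R). p \<in> planners \<and> R \<in> rewards \<and> compatible \<pi> (p, R)}"

lemma min_compatible_K_eq: "min_compatible_K K \<pi> = Inf (K ` compatible_pairs \<pi>)"
  by (simp add: min_compatible_K_def compatible_pairs_def)

lemma zero_reward_in_rewards: "zero_reward \<in> rewards"
  by (simp add: rewards_def zero_reward_def)

lemma R_pol_in_rewards: "R_pol \<pi> \<in> rewards"
  by (simp add: rewards_def R_pol_def)

lemma neg_reward_in_rewards_iff: "neg_reward R \<in> rewards \<longleftrightarrow> R \<in> rewards"
  by (auto simp: rewards_def neg_reward_def)

lemma p_pol_in_planners: "p_pol \<pi> \<in> planners"
  by (simp add: planners_def p_pol_def)

lemma p_pol_apply: "R \<in> rewards \<Longrightarrow> p_pol \<pi> R = \<pi>"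
  by (simp add: p_pol_def)

lemma p_greedy_in_planners: "p_greedy \<in> planners"
  by (simp add: planners_def p_greedy_def)

lemma neg_planner_in_planners: "p \<in> planners \<Longrightarrow> neg_planner p \<in> planners"
  using neg_reward_in_rewards_iff
  by (auto simp: planners_def neg_planner_def neg_reward_def)

lemma neg_planner_neg_reward: "neg_planner p (neg_reward R) = p R"
  by (simp add: neg_planner_def neg_reward_def)

lemma p_greedy_R_pol: "p_greedy (R_pol (\<pi> :: 's \<Rightarrow> 'a::finite)) = \<pi>"
proof -
  have "arg_max (\<lambda>a. R_pol \<pi> s a) (\<lambda>_. True) = \<pi> s" for s
  proof -
    have "is_arg_max (\<lambda>a. R_pol \<pi> s a) (\<lambda>_. True) x \<longleftrightarrow> x = \<pi> s" for x
      by (auto simp: is_arg_max_def R_pol_def)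
    then show ?thesis
      unfolding arg_max_def by (metis someI_ex)
  qed
  then show ?thesis
    by (simp add: p_greedy_def R_pol_in_rewards)
qed

lemma F1_apply: "F1 (p, R) = (p_pol (p R), zero_reward)"
  by (simp add: F1_def f1_def f3_def f5_def)

lemma F2_apply: "F2 (p, R) = (p_greedy, R_pol (p R))"
  by (simp add: F2_def f2_def f3_def f6_def)

lemma F3_apply: "F3 (p, R) = (neg_planner p_greedy, neg_reward (R_pol (p R)))"
  by (simp add: F3_def f2_def f3_def f4_def f6_def)

lemma min_compatible_K_le: "pr \<in> compatible_pairs \<pi> \<Longrightarrow> min_compatible_K K \<pi> \<le> K pr"
  by (simp add: min_compatible_K_eq cInf_lower)

lemma min_compatible_K_attained:
  assumes "compatible_pairs \<pi> \<noteq> {}"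
  obtains pr where "pr \<in> compatible_pairs \<pi>" "K pr = min_compatible_K K \<pi>"
proof -
  have "Inf (K ` compatible_pairs \<pi>) \<in> K ` compatible_pairs \<pi>"
    using assms by (simp add: Inf_nat_def1)
  then show thesis
    using that by (auto simp: min_compatible_K_eq)
qed

lemma abs_K_minus_min_compatible_K_le:
  assumes "c_reasonable K c" and "F \<in> Fset"
    and q_compatible: "q \<in> compatible_pairs \<pi>"
    and F_const: "\<And>pr. pr \<in> compatible_pairs \<pi> \<Longrightarrow> F pr = q"
  shows "\<bar>real (K q) - real (min_compatible_K K \<pi>)\<bar> \<le> c"
proof -
  obtain p R where pR: "(p, R) \<in> compatible_pairs \<pi>" "K (p, R) = min_compatible_K K \<pi>"
    using q_compatible by (metis min_compatible_K_attained empty_iff surj_pair)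
  have "real (K (F (p, R))) - real (K (p, R)) \<le> c"
    using assms(1,2) pR(1) by (simp add: c_reasonable_def compatible_pairs_def)
  moreover have "min_compatible_K K \<pi> \<le> K q"
    using q_compatible by (rule min_compatible_K_le)
  ultimately show ?thesis
    using pR F_const by simp
qed

theorem proposition3:
  fixes \<pi>d :: "'s \<Rightarrow> 'a::finite"
    and K :: "('s,'a) planner \<times> ('s,'a) reward \<Rightarrow> nat"
    and c :: real
  assumes "c \<ge> 0"
    and "c_reasonable K c"
  shows "\<forall>pr \<in> {(p_pol \<pi>d, zero_reward), (p_greedy, R_pol \<pi>d),
                   (neg_planner p_greedy, neg_reward (R_pol \<pi>d))}.
           fst pr \<in> planners \<and> snd pr \<in> rewards \<and> compatible \<pi>d pr \<and>
           \<bar>real (K pr) - real (min_compatible_K K \<pi>d)\<bar> \<le> c"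
proof -
  let ?pairs = "compatible_pairs \<pi>d"
  have F_images: "F1 pr = (p_pol \<pi>d, zero_reward)" "F2 pr = (p_greedy, R_pol \<pi>d)"
      "F3 pr = (neg_planner p_greedy, neg_reward (R_pol \<pi>d))"
    if "pr \<in> ?pairs" for pr
    using that by (auto simp: compatible_pairs_def compatible_def F1_apply F2_apply F3_apply)
  have in_pairs: "(p_pol \<pi>d, zero_reward) \<in> ?pairs" "(p_greedy, R_pol \<pi>d) \<in> ?pairs"
      "(neg_planner p_greedy, neg_reward (R_pol \<pi>d)) \<in> ?pairs"
    by (simp_all add: compatible_pairs_def compatible_def p_pol_apply zero_reward_in_rewards
        p_pol_in_planners p_greedy_in_planners neg_planner_in_planners R_pol_in_rewards
        neg_reward_in_rewards_iff neg_planner_neg_reward p_greedy_R_pol)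
  have "Fset = {F1, F2, F3, F4}"
    by (simp add: Fset_def)
  then have near_min: "\<bar>real (K q) - real (min_compatible_K K \<pi>d)\<bar> \<le> c"
    if "q \<in> ?pairs" and "F \<in> {F1, F2, F3}" and "\<And>pr. pr \<in> ?pairs \<Longrightarrow> F pr = q" for F q
    using abs_K_minus_min_compatible_K_le[OF assms(2) _ that(1)] that(2,3) by blast
  show ?thesis
    using in_pairs near_min[OF in_pairs(1), of F1] near_min[OF in_pairs(2), of F2]
      near_min[OF in_pairs(3), of F3] F_images
    by (auto simp: compatible_pairs_def)
qed

end
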